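(* For every $s\in[0,1]$, $$\{(g(s,x),h(s,x)):x\in[a,b]\}=\{(x,w(x)+s\varphi(x)):x\in[a,b]\}.$$
   Context: Let $w\in C^3(\mathbb R)$ be periodic with $w>0$ on $[-1,1]$. Let $-1<a<b<1$ and let $\varphi:[a,b]\to\mathbb R$ be a polynomial with $\varphi^{(k)}(a)=\varphi^{(k)}(b)=0$ for $k=0,1,2,3$, extended by zero outside $[a,b]$. For $x\in\mathbb R$, $(\xi(t,x),\eta(t,x))$ is the unique global solution of $$\frac{d\xi}{dt}=-w'(\xi)\varphi(\xi)-(\eta-w(\xi))\varphi'(\xi),\quad\frac{d\eta}{dt}=\varphi(\xi),\quad \xi(0)=x,\ \eta(0)=w(x).$$ For $s\in[0,1]$, $t_0(s,x)\ge0$ denotes the first time $t\ge0$ with $\eta(t,x)=w(\xi(t,x))+s\varphi(\xi(t,x))$ (it exists). Set $g(s,x)=\xi(t_0(s,x),x)$ and $h(s,x)=\eta(t_0(s,x),x)$. *)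

theory Defs
  imports "HOL-Analysis.Analysis" "HOL-Computational_Algebra.Polynomial"
begin

definition C_k :: "nat \<Rightarrow> (real \<Rightarrow> real) \<Rightarrow> bool" where
  "C_k k f \<longleftrightarrow> (\<forall>j<k. \<forall>x. ((deriv ^^ j) f) differentiable (at x))
                  \<and> continuous_on UNIV ((deriv ^^ k) f)"

definition periodic_fun :: "(real \<Rightarrow> real) \<Rightarrow> bool" where
  "periodic_fun f \<longleftrightarrow> (\<exists>T>0. \<forall>x. f (x + T) = f x)"

definition ext_zero :: "real poly \<Rightarrow> real \<Rightarrow> real \<Rightarrow> real \<Rightarrow> real" where
  "ext_zero p a b x = (if a \<le> x \<and> x \<le> b then poly p x else 0)"

definition first_time ::
  "(real \<Rightarrow> real \<Rightarrow> real) \<Rightarrow> (real \<Rightarrow> real \<Rightarrow> real) \<Rightarrow> (real \<Rightarrow> real) \<Rightarrow> (real \<Rightarrow> real)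
    \<Rightarrow> real \<Rightarrow> real \<Rightarrow> real" where
  "first_time \<xi> \<eta> w \<phi> s x = Inf {t. 0 \<le> t \<and> \<eta> t x = w (\<xi> t x) + s * \<phi> (\<xi> t x)}"

end

theory Submission
  imports Defs
begin

text \<open>Start at \<open>(x, w x)\<close> with \<open>x\<close> in a maximal interval \<open>(c1, c2)\<close> of \<open>{phi \<noteq> 0}\<close>.
  While the trajectory stays over \<open>(c1, c2)\<close> it lies on the curve
  \<open>\<eta> = w \<xi> + \<sigma> phi \<xi>\<close> (\<open>\<sigma> = level x t\<close> below), and
  \<open>\<sigma>' = 1 + (w' \<xi> + \<sigma> phi' \<xi>)\<^sup>2 \<ge> 1\<close>, so \<open>\<sigma>\<close> reaches \<open>s\<close> before time \<open>s\<close>.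
  The trajectory cannot reach \<open>c1\<close> or \<open>c2\<close> first: there \<open>\<eta> = w \<xi>\<close>, and the points
  \<open>(c, w c)\<close> with \<open>phi c = 0\<close> are equilibria, which by a Gronwall estimate cannot be reached
  in finite time. Hence \<open>g s\<close> maps \<open>(c1, c2)\<close> into itself with \<open>h = w + s phi\<close> at \<open>g\<close>,
  and it fixes the zeros of \<open>phi\<close>. The same estimate makes \<open>g s\<close> continuous on
  \<open>[c1, c2]\<close>, so it is onto by the intermediate value theorem.\<close>

lemma has_real_derivative_at_split:
  fixes f :: "real \<Rightarrow> real"
  assumes "(f has_real_derivative D) (at x within {..x})" "(f has_real_derivative D) (at x within {x..})"
  shows "(f has_real_derivative D) (at x)"
proof -
  have "{..x} \<union> {x..} = (UNIV :: real set)" by auto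
  then have "at x = at x within ({..x} \<union> {x..})" by simp
  then show ?thesis using assms unfolding has_field_derivative_iff
    by (simp only: Lim_within_Un)
qed

lemma ext_zero_has_real_derivative:
  fixes q :: "real poly"
  assumes ab: "a < b"
    and q: "poly q a = 0" "poly q b = 0" "poly (pderiv q) a = 0" "poly (pderiv q) b = 0"
  shows "(ext_zero q a b has_real_derivative ext_zero (pderiv q) a b x) (at x)"
proof -
  let ?z = "ext_zero q a b"
  have zero_side: "(?z has_real_derivative 0) (at x within S)"
    if "x = a \<and> S = {..x} \<or> x = b \<and> S = {x..}" for S
  proof -
    have "((\<lambda>_. 0) has_real_derivative 0) (at x within S)" by simp
    then show ?thesis
      by (rule has_field_derivative_transform_within[where d=1])
        (use that q ab in \<open>auto simp: ext_zero_def\<close>)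
  qed
  have poly_side: "(?z has_real_derivative 0) (at x within S)"
    if "x = a \<and> S = {x..} \<or> x = b \<and> S = {..x}" for S
  proof -
    have "(poly q has_real_derivative 0) (at x within S)"
      using has_field_derivative_at_within[OF poly_DERIV[of q x]] that q by auto
    then show ?thesis
      by (rule has_field_derivative_transform_within[where d="b-a"])
        (use that ab in \<open>auto simp: ext_zero_def dist_real_def\<close>)
  qed
  consider "x < a \<or> b < x" | "x = a \<or> x = b" | "a < x \<and> x < b" by linarith
  then show ?thesis
  proof cases
    case 1
    then have "open ({..<a} \<union> {b<..})" "x \<in> {..<a} \<union> {b<..}" by auto
    then have "(?z has_real_derivative 0) (at x)"
      by (rule has_field_derivative_transform_within_open[OF DERIV_const[of 0]])
        (use 1 ab in \<open>auto simp: ext_zero_def\<close>)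
    then show ?thesis using 1 by (auto simp: ext_zero_def)
  next
    case 2
    then have "ext_zero (pderiv q) a b x = 0" using q by (auto simp: ext_zero_def)
    then show ?thesis using 2 zero_side poly_side by (auto intro: has_real_derivative_at_split)
  next
    case 3
    from has_field_derivative_transform_within_open[OF poly_DERIV[of q x], of "{a<..<b}"] 3
    show ?thesis by (auto simp: ext_zero_def)
  qed
qed

lemma continuous_vanishing_outside_bounded:
  fixes f :: "real \<Rightarrow> real"
  assumes "\<And>x. isCont f x" "\<And>x. x \<notin> {a..b} \<Longrightarrow> f x = 0"
  obtains B where "B \<ge> 0" "\<And>x. \<bar>f x\<bar> \<le> B"
proof -
  have "compact (f ` {a..b})"
    using assms(1) by (intro compact_continuous_image continuous_at_imp_continuous_on) auto
  then obtain B where "B > 0" "\<And>x. x \<in> {a..b} \<Longrightarrow> \<bar>f x\<bar> \<le> B"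
    by (auto dest!: compact_imp_bounded simp: bounded_pos)
  with assms(2) show ?thesis by (intro that[of B]) (force, metis abs_zero less_imp_le)
qed

lemma lipschitz_of_derivative_vanishing_outside:
  fixes f f' :: "real \<Rightarrow> real"
  assumes "\<And>x. (f has_real_derivative f' x) (at x)" "\<And>x. isCont f' x" "\<And>x. x \<notin> {a..b} \<Longrightarrow> f' x = 0"
  obtains L where "L \<ge> 0" "\<And>u v. \<bar>f u - f v\<bar> \<le> L * \<bar>u - v\<bar>"
proof -
  obtain L where "L \<ge> 0" "\<And>x. \<bar>f' x\<bar> \<le> L"
    using continuous_vanishing_outside_bounded assms(2,3) by metis
  with assms(1) show ?thesis
    using field_differentiable_bound[of UNIV f f' L]
    by (intro that) (auto simp: has_field_derivative_at_within)
qed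

lemma lipschitz_of_product_vanishing_outside:
  fixes f f' g g' :: "real \<Rightarrow> real"
  assumes "\<And>x. (f has_real_derivative f' x) (at x)" "\<And>x. (g has_real_derivative g' x) (at x)"
    and "\<And>x. isCont f x" "\<And>x. isCont f' x" "\<And>x. isCont g x" "\<And>x. isCont g' x"
    and "\<And>x. x \<notin> {a..b} \<Longrightarrow> g x = 0" "\<And>x. x \<notin> {a..b} \<Longrightarrow> g' x = 0"
  obtains L where "L \<ge> 0" "\<And>u v. \<bar>f u * g u - f v * g v\<bar> \<le> L * \<bar>u - v\<bar>"
proof (rule lipschitz_of_derivative_vanishing_outside[where a=a and b=b])
  show "((\<lambda>x. f x * g x) has_real_derivative f' x * g x + f x * g' x) (at x)" for x
    using DERIV_mult[OF assms(1,2)] by (simp add: mult.commute)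
  show "isCont (\<lambda>x. f' x * g x + f x * g' x) x" for x
    using assms(3-6) by (intro continuous_intros)
qed (use assms(7,8) that in auto)

lemma at_within_Icc_interior: "a < x \<Longrightarrow> x < b \<Longrightarrow> at x within {a..b} = at (x :: real)"
  by (rule at_within_interior) simp

lemma isCont_le_from_left:
  fixes f g :: "real \<Rightarrow> real"
  assumes "isCont f \<tau>" "isCont g \<tau>" "0 < \<tau>" "\<And>t. 0 < t \<Longrightarrow> t < \<tau> \<Longrightarrow> f t \<le> g t"
  shows "f \<tau> \<le> g \<tau>"
proof (rule tendsto_le[OF trivial_limit_at_left_real])
  show "(g \<longlongrightarrow> g \<tau>) (at_left \<tau>)" "(f \<longlongrightarrow> f \<tau>) (at_left \<tau>)"
    using assms(1,2) unfolding isCont_def filterlim_at_split by simp_all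
  show "\<forall>\<^sub>F x in at_left \<tau>. f x \<le> g x"
    using eventually_at_left_real[OF assms(3)] by eventually_elim (use assms(4) in auto)
qed

lemma gronwall_two_sided:
  fixes D D' :: "real \<Rightarrow> real"
  assumes D: "\<And>t. (D has_real_derivative D' t) (at t)"
    and bound: "\<And>t. 0 \<le> t \<Longrightarrow> t \<le> T \<Longrightarrow> \<bar>D' t\<bar> \<le> K * D t"
    and t: "0 \<le> t" "t \<le> T"
  shows "D t \<le> D 0 * exp (K * t)" and "D 0 * exp (- (K * t)) \<le> D t"
proof -
  have "D t * exp (- (K * t)) \<le> D 0 * exp (- (K * 0))"
  proof (rule DERIV_nonpos_imp_nonincreasing[OF t(1)])
    fix u assume "0 \<le> u" "u \<le> t"
    then have "D' u - K * D u \<le> 0" using bound[of u] t by auto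
    moreover have "((\<lambda>u. D u * exp (- (K * u))) has_real_derivative
        (D' u - K * D u) * exp (- (K * u))) (at u)"
      by (auto intro!: derivative_eq_intros D simp: algebra_simps)
    ultimately show "\<exists>y. ((\<lambda>u. D u * exp (- (K * u))) has_real_derivative y) (at u) \<and> y \<le> 0"
      by (metis mult_nonpos_nonneg exp_ge_zero)
  qed
  then show "D t \<le> D 0 * exp (K * t)"
    by (simp add: exp_minus divide_le_eq field_simps)
  have "D 0 * exp (K * 0) \<le> D t * exp (K * t)"
  proof (rule DERIV_nonneg_imp_nondecreasing[OF t(1)])
    fix u assume "0 \<le> u" "u \<le> t"
    then have "D' u + K * D u \<ge> 0" using bound[of u] t by auto
    moreover have "((\<lambda>u. D u * exp (K * u)) has_real_derivative (D' u + K * D u) * exp (K * u)) (at u)"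
      by (auto intro!: derivative_eq_intros D simp: algebra_simps)
    ultimately show "\<exists>y. ((\<lambda>u. D u * exp (K * u)) has_real_derivative y) (at u) \<and> y \<ge> 0"
      by (metis zero_le_mult_iff exp_ge_zero)
  qed
  then show "D 0 * exp (- (K * t)) \<le> D t"
    by (simp add: exp_minus field_simps)
qed

lemma abs_energy_derivative_le:
  fixes p q A B L :: real
  assumes "L \<ge> 0" "\<bar>A\<bar> \<le> L * (\<bar>p\<bar> + \<bar>q\<bar>)" "\<bar>B\<bar> \<le> L * \<bar>p\<bar>"
  shows "\<bar>2 * p * A + 2 * q * B\<bar> \<le> 4 * L * (p\<^sup>2 + q\<^sup>2)"
proof -
  have "\<bar>2 * p * A + 2 * q * B\<bar> \<le> 2 * \<bar>p\<bar> * (L * (\<bar>p\<bar> + \<bar>q\<bar>)) + 2 * \<bar>q\<bar> * (L * \<bar>p\<bar>)"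
    using assms
    by (auto simp: abs_mult intro!: add_mono mult_left_mono abs_triangle_ineq[THEN order_trans])
  also have "\<dots> = 2 * L * (\<bar>p\<bar>\<^sup>2 + 2 * \<bar>p\<bar> * \<bar>q\<bar>)" by (simp add: algebra_simps power2_eq_square)
  also have "\<dots> \<le> 2 * L * (2 * \<bar>p\<bar>\<^sup>2 + \<bar>q\<bar>\<^sup>2)"
    using sum_squares_bound[of "\<bar>p\<bar>" "\<bar>q\<bar>"] assms(1) by (intro mult_left_mono) auto
  also have "\<dots> \<le> 4 * L * (p\<^sup>2 + q\<^sup>2)" using assms(1) by (simp add: algebra_simps mult_left_mono)
  finally show ?thesis .
qed

lemma planar_gronwall:
  fixes X Y X' Y' g :: "real \<Rightarrow> real" and f :: "real \<Rightarrow> real \<Rightarrow> real"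
  assumes X: "\<And>t. (X has_real_derivative f (X t) (Y t)) (at t)"
    and Y: "\<And>t. (Y has_real_derivative g (X t)) (at t)"
    and X': "\<And>t. (X' has_real_derivative f (X' t) (Y' t)) (at t)"
    and Y': "\<And>t. (Y' has_real_derivative g (X' t)) (at t)"
    and L: "L \<ge> 0"
    and f_lip: "\<And>u1 v1 u2 v2. \<bar>v1\<bar> \<le> R \<Longrightarrow> \<bar>v2\<bar> \<le> R \<Longrightarrow>
        \<bar>f u1 v1 - f u2 v2\<bar> \<le> L * (\<bar>u1 - u2\<bar> + \<bar>v1 - v2\<bar>)"
    and g_lip: "\<And>u1 u2. \<bar>g u1 - g u2\<bar> \<le> L * \<bar>u1 - u2\<bar>"
    and Y_bounded: "\<And>t. 0 \<le> t \<Longrightarrow> t \<le> T \<Longrightarrow> \<bar>Y t\<bar> \<le> R \<and> \<bar>Y' t\<bar> \<le> R"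
    and t: "0 \<le> t" "t \<le> T"
  shows "(X t - X' t)\<^sup>2 + (Y t - Y' t)\<^sup>2 \<le> ((X 0 - X' 0)\<^sup>2 + (Y 0 - Y' 0)\<^sup>2) * exp (4 * L * t)"
    and "((X 0 - X' 0)\<^sup>2 + (Y 0 - Y' 0)\<^sup>2) * exp (- (4 * L * t)) \<le> (X t - X' t)\<^sup>2 + (Y t - Y' t)\<^sup>2"
proof -
  define D where "D t = (X t - X' t)\<^sup>2 + (Y t - Y' t)\<^sup>2" for t
  define D' where "D' t = 2 * (X t - X' t) * (f (X t) (Y t) - f (X' t) (Y' t))
      + 2 * (Y t - Y' t) * (g (X t) - g (X' t))" for t
  have "(D has_real_derivative D' t) (at t)" for t
    unfolding D_def D'_def by (auto intro!: derivative_eq_intros X X' Y Y' simp: algebra_simps)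
  moreover have "\<bar>D' u\<bar> \<le> 4 * L * D u" if "0 \<le> u" "u \<le> T" for u
    unfolding D_def D'_def
    by (rule abs_energy_derivative_le[OF L]) (use Y_bounded[OF that] f_lip g_lip in auto)
  ultimately show "D t \<le> D 0 * exp (4 * L * t)" "D 0 * exp (- (4 * L * t)) \<le> D t"
    using gronwall_two_sided[of D D' T "4 * L" t] t by auto
qed

section \<open>Regularity and Gronwall estimates for the flow\<close>

locale graph_flow =
  fixes w :: "real \<Rightarrow> real" and p :: "real poly" and a b :: real
    and \<xi> \<eta> :: "real \<Rightarrow> real \<Rightarrow> real"
  assumes w_C3: "C_k 3 w"
    and ab: "a < b"
    and p_a: "\<forall>k\<le>3. poly ((pderiv ^^ k) p) a = 0"
    and p_b: "\<forall>k\<le>3. poly ((pderiv ^^ k) p) b = 0"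
    and xi_ode: "\<forall>x t. ((\<lambda>t. \<xi> t x) has_real_derivative
          (- deriv w (\<xi> t x) * ext_zero p a b (\<xi> t x)
           - (\<eta> t x - w (\<xi> t x)) * deriv (ext_zero p a b) (\<xi> t x))) (at t)"
    and eta_ode: "\<forall>x t. ((\<lambda>t. \<eta> t x) has_real_derivative ext_zero p a b (\<xi> t x)) (at t)"
    and init: "\<forall>x. \<xi> 0 x = x \<and> \<eta> 0 x = w x"
begin

abbreviation "phi \<equiv> ext_zero p a b"
abbreviation "phi' \<equiv> ext_zero (pderiv p) a b"
abbreviation "phi'' \<equiv> ext_zero (pderiv (pderiv p)) a b"
abbreviation "w' \<equiv> deriv w"
abbreviation "w'' \<equiv> deriv (deriv w)"

definition F :: "real \<Rightarrow> real \<Rightarrow> real" where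
  "F u v = - w' u * phi u - (v - w u) * phi' u"

lemma ext_zero_pderiv_has_real_derivative:
  assumes "k \<le> 2"
  shows "(ext_zero ((pderiv ^^ k) p) a b has_real_derivative
      ext_zero ((pderiv ^^ Suc k) p) a b x) (at x)"
  using ext_zero_has_real_derivative[of a b "(pderiv ^^ k) p"] ab assms
    p_a[rule_format, of k] p_b[rule_format, of k]
    p_a[rule_format, of "Suc k"] p_b[rule_format, of "Suc k"]
  by simp

lemma phi_has_real_derivative: "(phi has_real_derivative phi' x) (at x)"
  using ext_zero_pderiv_has_real_derivative[of 0] by simp

lemma phi'_has_real_derivative: "(phi' has_real_derivative phi'' x) (at x)"
  using ext_zero_pderiv_has_real_derivative[of 1] by simp

lemma isCont_phi: "isCont phi x"
  and isCont_phi': "isCont phi' x"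
  and isCont_phi'': "isCont phi'' x"
  using phi_has_real_derivative phi'_has_real_derivative
    ext_zero_pderiv_has_real_derivative[of 2, THEN DERIV_isCont]
  by (auto intro: DERIV_isCont simp: numeral_2_eq_2)

lemma phi_outside: "x \<notin> {a..b} \<Longrightarrow> phi x = 0"
  and phi'_outside: "x \<notin> {a..b} \<Longrightarrow> phi' x = 0"
  and phi''_outside: "x \<notin> {a..b} \<Longrightarrow> phi'' x = 0"
  by (auto simp: ext_zero_def)

lemma w_has_real_derivative: "(w has_real_derivative w' x) (at x)"
  and w'_has_real_derivative: "(w' has_real_derivative w'' x) (at x)"
  and isCont_w'': "isCont w'' x"
proof -
  have "\<forall>j<3. \<forall>x. ((deriv ^^ j) w) differentiable (at x)" using w_C3 by (simp add: C_k_def)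
  then have "w differentiable (at x)" "w' differentiable (at x)" "w'' differentiable (at x)"
    by (auto dest: spec[of _ 0] spec[of _ 1] spec[of _ 2] simp: numeral_eq_Suc)
  then show "(w has_real_derivative w' x) (at x)" "(w' has_real_derivative w'' x) (at x)" "isCont w'' x"
    by (simp_all add: DERIV_deriv_iff_real_differentiable differentiable_imp_continuous_within)
qed

lemma isCont_w: "isCont w x" and isCont_w': "isCont w' x"
  by (rule DERIV_isCont[OF w_has_real_derivative], rule DERIV_isCont[OF w'_has_real_derivative])

lemma xi_has_real_derivative: "((\<lambda>t. \<xi> t x) has_real_derivative F (\<xi> t x) (\<eta> t x)) (at t)"
  using xi_ode DERIV_imp_deriv[OF phi_has_real_derivative] by (simp add: F_def)

lemma eta_has_real_derivative: "((\<lambda>t. \<eta> t x) has_real_derivative phi (\<xi> t x)) (at t)"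
  using eta_ode by simp

lemma isCont_xi: "isCont (\<lambda>t. \<xi> t x) t" and isCont_eta: "isCont (\<lambda>t. \<eta> t x) t"
  by (rule DERIV_isCont[OF xi_has_real_derivative], rule DERIV_isCont[OF eta_has_real_derivative])

lemma isCont_along_xi: "isCont f (\<xi> t x) \<Longrightarrow> isCont (\<lambda>t. f (\<xi> t x)) t"
  by (rule isCont_o2[OF isCont_xi])

lemma F_lipschitz:
  assumes "R \<ge> 0"
  obtains L where "L \<ge> 0"
    "\<And>u1 v1 u2 v2. \<bar>v1\<bar> \<le> R \<Longrightarrow> \<bar>v2\<bar> \<le> R \<Longrightarrow> \<bar>F u1 v1 - F u2 v2\<bar> \<le> L * (\<bar>u1 - u2\<bar> + \<bar>v1 - v2\<bar>)"
proof -
  obtain L1 where L1: "L1 \<ge> 0" "\<And>u v. \<bar>w' u * phi u - w' v * phi v\<bar> \<le> L1 * \<bar>u - v\<bar>"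
    using lipschitz_of_product_vanishing_outside[OF w'_has_real_derivative phi_has_real_derivative
      isCont_w' isCont_w'' isCont_phi isCont_phi' phi_outside phi'_outside] by blast
  obtain L2 where L2: "L2 \<ge> 0" "\<And>u v. \<bar>w u * phi' u - w v * phi' v\<bar> \<le> L2 * \<bar>u - v\<bar>"
    using lipschitz_of_product_vanishing_outside[OF w_has_real_derivative phi'_has_real_derivative
      isCont_w isCont_w' isCont_phi' isCont_phi'' phi'_outside phi''_outside] by blast
  obtain L3 where L3: "L3 \<ge> 0" "\<And>u v. \<bar>phi' u - phi' v\<bar> \<le> L3 * \<bar>u - v\<bar>"
    using lipschitz_of_derivative_vanishing_outside[OF phi'_has_real_derivative isCont_phi''
        phi''_outside]
    by blast
  obtain M where M: "M \<ge> 0" "\<And>u. \<bar>phi' u\<bar> \<le> M"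
    using continuous_vanishing_outside_bounded[OF isCont_phi' phi'_outside] by metis
  show ?thesis
  proof (rule that[of "L1 + R * L3 + L2 + M"])
    show "L1 + R * L3 + L2 + M \<ge> 0" using L1 L2 L3 M assms by simp
    fix u1 v1 u2 v2 :: real assume v: "\<bar>v1\<bar> \<le> R" "\<bar>v2\<bar> \<le> R"
    have "F u1 v1 - F u2 v2 = - (w' u1 * phi u1 - w' u2 * phi u2) - v1 * (phi' u1 - phi' u2)
       - (v1 - v2) * phi' u2 + (w u1 * phi' u1 - w u2 * phi' u2)"
      by (simp add: F_def algebra_simps)
    also have "\<bar>\<dots>\<bar> \<le> \<bar>w' u1 * phi u1 - w' u2 * phi u2\<bar> + \<bar>v1\<bar> * \<bar>phi' u1 - phi' u2\<bar>
       + \<bar>v1 - v2\<bar> * \<bar>phi' u2\<bar> + \<bar>w u1 * phi' u1 - w u2 * phi' u2\<bar>"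
      by (simp add: abs_mult[symmetric])
    also have "\<dots> \<le> L1 * \<bar>u1 - u2\<bar> + R * (L3 * \<bar>u1 - u2\<bar>) + \<bar>v1 - v2\<bar> * M + L2 * \<bar>u1 - u2\<bar>"
      by (intro add_mono mult_mono mult_left_mono L1(2) L2(2) L3(2) M(2) v(1)) (use assms in auto)
    also have "\<dots> \<le> (L1 + R * L3 + L2 + M) * (\<bar>u1 - u2\<bar> + \<bar>v1 - v2\<bar>)"
      using L1 L2 L3 M assms by (simp add: algebra_simps add_increasing mult_nonneg_nonneg)
    finally show "\<bar>F u1 v1 - F u2 v2\<bar> \<le> (L1 + R * L3 + L2 + M) * (\<bar>u1 - u2\<bar> + \<bar>v1 - v2\<bar>)" .
  qed
qed

lemma flow_lipschitz_bounds:
  obtains L R where "L \<ge> 0"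
    "\<And>u1 v1 u2 v2. \<bar>v1\<bar> \<le> R \<Longrightarrow> \<bar>v2\<bar> \<le> R \<Longrightarrow> \<bar>F u1 v1 - F u2 v2\<bar> \<le> L * (\<bar>u1 - u2\<bar> + \<bar>v1 - v2\<bar>)"
    "\<And>u1 u2. \<bar>phi u1 - phi u2\<bar> \<le> L * \<bar>u1 - u2\<bar>"
    "\<And>x t. x \<in> {a..b} \<Longrightarrow> 0 \<le> t \<Longrightarrow> t \<le> 2 \<Longrightarrow> \<bar>\<eta> t x\<bar> \<le> R"
proof -
  obtain M where M: "M \<ge> 0" "\<And>u. \<bar>phi u\<bar> \<le> M"
    using continuous_vanishing_outside_bounded[OF isCont_phi phi_outside] by metis
  have "compact (w ` {a..b})"
    by (intro compact_continuous_image continuous_at_imp_continuous_on) (auto intro: isCont_w)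
  then obtain W where W: "W > 0" "\<And>x. x \<in> {a..b} \<Longrightarrow> \<bar>w x\<bar> \<le> W"
    by (auto dest!: compact_imp_bounded simp: bounded_pos)
  define R where "R = W + 2 * M"
  have R: "\<bar>\<eta> t x\<bar> \<le> R" if "x \<in> {a..b}" "0 \<le> t" "t \<le> 2" for x t
  proof -
    have "\<bar>\<eta> u x - \<eta> v x\<bar> \<le> M * \<bar>u - v\<bar>" for u v
      using field_differentiable_bound[of UNIV "\<lambda>t. \<eta> t x" "\<lambda>t. phi (\<xi> t x)" M]
        eta_has_real_derivative M(2) by (auto simp: has_field_derivative_at_within)
    from this[of t 0] show ?thesis
      using init W(2)[OF that(1)] M(1) that mult_left_mono[of t 2 M] by (auto simp: R_def)
  qed
  obtain L1 where L1: "L1 \<ge> 0"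
    "\<And>u1 v1 u2 v2. \<bar>v1\<bar> \<le> R \<Longrightarrow> \<bar>v2\<bar> \<le> R \<Longrightarrow> \<bar>F u1 v1 - F u2 v2\<bar> \<le> L1 * (\<bar>u1 - u2\<bar> + \<bar>v1 - v2\<bar>)"
    using F_lipschitz[of R] W M by (auto simp: R_def)
  obtain L2 where L2: "L2 \<ge> 0" "\<And>u1 u2. \<bar>phi u1 - phi u2\<bar> \<le> L2 * \<bar>u1 - u2\<bar>"
    using lipschitz_of_derivative_vanishing_outside[OF phi_has_real_derivative isCont_phi' phi'_outside]
    by blast
  show ?thesis
  proof (rule that[of "max L1 L2" R])
    fix u1 v1 u2 v2 :: real assume "\<bar>v1\<bar> \<le> R" "\<bar>v2\<bar> \<le> R"
    from L1(2)[OF this] show "\<bar>F u1 v1 - F u2 v2\<bar> \<le> max L1 L2 * (\<bar>u1 - u2\<bar> + \<bar>v1 - v2\<bar>)"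
      by (rule order_trans) (simp add: mult_right_mono)
  next
    fix u1 u2 :: real
    show "\<bar>phi u1 - phi u2\<bar> \<le> max L1 L2 * \<bar>u1 - u2\<bar>"
      using L2(2) by (rule order_trans) (simp add: mult_right_mono)
  qed (use L1 R in auto)
qed

lemma equilibrium_trajectory:
  assumes c: "c \<in> {a..b}" "phi c = 0" and t: "0 \<le> t" "t \<le> 2"
  shows "\<xi> t c = c \<and> \<eta> t c = w c"
proof -
  obtain L R where L: "L \<ge> 0"
    "\<And>u1 v1 u2 v2. \<bar>v1\<bar> \<le> R \<Longrightarrow> \<bar>v2\<bar> \<le> R \<Longrightarrow> \<bar>F u1 v1 - F u2 v2\<bar> \<le> L * (\<bar>u1 - u2\<bar> + \<bar>v1 - v2\<bar>)"
    "\<And>u1 u2. \<bar>phi u1 - phi u2\<bar> \<le> L * \<bar>u1 - u2\<bar>"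
    "\<And>x t. x \<in> {a..b} \<Longrightarrow> 0 \<le> t \<Longrightarrow> t \<le> 2 \<Longrightarrow> \<bar>\<eta> t x\<bar> \<le> R"
    by (rule flow_lipschitz_bounds) blast
  have "F c (w c) = 0" using c by (simp add: F_def)
  then have "((\<lambda>_. c) has_real_derivative F c (w c)) (at u)"
    "((\<lambda>_. w c) has_real_derivative phi c) (at u)"
    for u using c by simp_all
  moreover have "\<bar>w c\<bar> \<le> R" using L(4)[of c 0] c init by simp
  ultimately have "(\<xi> t c - c)\<^sup>2 + (\<eta> t c - w c)\<^sup>2 \<le> ((\<xi> 0 c - c)\<^sup>2 + (\<eta> 0 c - w c)\<^sup>2) * exp (4 * L * t)"
    using L c by (intro planar_gronwall(1)[OF xi_has_real_derivative eta_has_real_derivative,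
        of _ _ _ R 2]) (auto intro: t)
  then have "(\<xi> t c - c)\<^sup>2 + (\<eta> t c - w c)\<^sup>2 \<le> 0" using init by simp
  then show ?thesis by (simp add: sum_power2_le_zero_iff)
qed

definition traj :: "real \<Rightarrow> real \<Rightarrow> real \<times> real" where
  "traj x t = (\<xi> t x, \<eta> t x)"

lemma traj_0: "traj x 0 = (x, w x)"
  using init by (simp add: traj_def)

lemma trajectory_dist_bounds:
  obtains C where
    "\<And>x1 x2 t. x1 \<in> {a..b} \<Longrightarrow> x2 \<in> {a..b} \<Longrightarrow> 0 \<le> t \<Longrightarrow> t \<le> 2 \<Longrightarrow>
      dist (traj x1 t) (traj x2 t) \<le> C * dist (traj x1 0) (traj x2 0)"
    "\<And>x1 x2 t. x1 \<in> {a..b} \<Longrightarrow> x2 \<in> {a..b} \<Longrightarrow> 0 \<le> t \<Longrightarrow> t \<le> 2 \<Longrightarrow>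
      dist (traj x1 0) (traj x2 0) \<le> C * dist (traj x1 t) (traj x2 t)"
proof -
  obtain L R where L: "L \<ge> 0"
    "\<And>u1 v1 u2 v2. \<bar>v1\<bar> \<le> R \<Longrightarrow> \<bar>v2\<bar> \<le> R \<Longrightarrow> \<bar>F u1 v1 - F u2 v2\<bar> \<le> L * (\<bar>u1 - u2\<bar> + \<bar>v1 - v2\<bar>)"
    "\<And>u1 u2. \<bar>phi u1 - phi u2\<bar> \<le> L * \<bar>u1 - u2\<bar>"
    "\<And>x t. x \<in> {a..b} \<Longrightarrow> 0 \<le> t \<Longrightarrow> t \<le> 2 \<Longrightarrow> \<bar>\<eta> t x\<bar> \<le> R"
    by (rule flow_lipschitz_bounds) blast
  define D where "D x1 x2 t = (\<xi> t x1 - \<xi> t x2)\<^sup>2 + (\<eta> t x1 - \<eta> t x2)\<^sup>2" for x1 x2 t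
  have dist_traj: "dist (traj x1 t) (traj x2 t) = sqrt (D x1 x2 t)" for x1 x2 t
    by (simp add: traj_def D_def dist_Pair_Pair dist_real_def)
  have D_nonneg: "D x1 x2 t \<ge> 0" for x1 x2 t by (simp add: D_def)
  have exp_le: "exp (4 * L * t) \<le> exp (8 * L)" if "t \<le> 2" for t
    using mult_left_mono[OF that L(1)] by simp
  show ?thesis
  proof (rule that[of "exp (4 * L)"])
    fix x1 x2 t :: real assume x: "x1 \<in> {a..b}" "x2 \<in> {a..b}" and t: "0 \<le> t" "t \<le> 2"
    note gronwall = planar_gronwall[where X="\<lambda>t. \<xi> t x1" and Y="\<lambda>t. \<eta> t x1"
        and X'="\<lambda>t. \<xi> t x2" and Y'="\<lambda>t. \<eta> t x2" and R=R and T=2,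
        OF xi_has_real_derivative eta_has_real_derivative xi_has_real_derivative eta_has_real_derivative
        L(1-3) _ t]
    have "D x1 x2 t \<le> D x1 x2 0 * exp (4 * L * t)" "D x1 x2 0 * exp (- (4 * L * t)) \<le> D x1 x2 t"
      unfolding D_def using gronwall L(4) x by auto
    moreover have "D x1 x2 0 = D x1 x2 0 * exp (- (4 * L * t)) * exp (4 * L * t)"
      by (simp add: mult.assoc flip: exp_add)
    ultimately have "D x1 x2 t \<le> D x1 x2 0 * exp (4 * L * t)" "D x1 x2 0 \<le> D x1 x2 t * exp (4 * L * t)"
      by (metis mult_right_mono exp_ge_zero)+
    then have "D x1 x2 t \<le> D x1 x2 0 * exp (8 * L)" "D x1 x2 0 \<le> D x1 x2 t * exp (8 * L)"
      using mult_left_mono[OF exp_le[OF t(2)] D_nonneg] by (meson order_trans)+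
    moreover have "sqrt (exp (8 * L)) = exp (4 * L)"
      using real_sqrt_abs[of "exp (4 * L)"] by (simp add: power2_eq_square flip: exp_add)
    ultimately show "dist (traj x1 t) (traj x2 t) \<le> exp (4 * L) * dist (traj x1 0) (traj x2 0)"
      "dist (traj x1 0) (traj x2 0) \<le> exp (4 * L) * dist (traj x1 t) (traj x2 t)"
      unfolding dist_traj using real_sqrt_le_mono by (fastforce simp: real_sqrt_mult mult.commute)+
  qed
qed

lemma dist_traj_tendsto_0:
  assumes "x0 \<in> {a..b}" "r > 0"
  shows "\<forall>\<^sub>F x in at x0 within {a..b}. \<forall>t\<in>{0..2}. dist (traj x t) (traj x0 t) < r"
proof -
  obtain C where C: "\<And>x1 x2 t. x1 \<in> {a..b} \<Longrightarrow> x2 \<in> {a..b} \<Longrightarrow> 0 \<le> t \<Longrightarrow> t \<le> 2 \<Longrightarrow>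
      dist (traj x1 t) (traj x2 t) \<le> C * dist (traj x1 0) (traj x2 0)"
    using trajectory_dist_bounds by metis
  have "((\<lambda>x. C * dist (traj x 0) (traj x0 0)) \<longlongrightarrow> C * dist (traj x0 0) (traj x0 0)) (at x0 within {a..b})"
    unfolding traj_0
    by (intro tendsto_intros continuous_within_tendsto_compose'[OF isCont_w] tendsto_ident_at) auto
  then have "\<forall>\<^sub>F x in at x0 within {a..b}. C * dist (traj x 0) (traj x0 0) < r"
    using assms(2) by (auto dest: order_tendstoD)
  moreover have "\<forall>\<^sub>F x in at x0 within {a..b}. x \<in> {a..b}"
    by (simp add: eventually_at_filter)
  ultimately show ?thesis
  proof eventually_elim
    case (elim x)
    then show ?case using C[of x x0] assms(1) by (meson atLeastAtMost_iff le_less_trans)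
  qed
qed

section \<open>Level along a trajectory and hitting time\<close>

definition level :: "real \<Rightarrow> real \<Rightarrow> real" where
  "level x t = (\<eta> t x - w (\<xi> t x)) / phi (\<xi> t x)"

lemma level_0: "level x 0 = 0"
  using init by (simp add: level_def)

lemma level_mult_phi:
  "phi (\<xi> t x) \<noteq> 0 \<Longrightarrow> \<eta> t x - w (\<xi> t x) = level x t * phi (\<xi> t x)"
  by (simp add: level_def)

lemma level_eq_iff:
  "phi (\<xi> t x) \<noteq> 0 \<Longrightarrow> level x t = s \<longleftrightarrow> \<eta> t x = w (\<xi> t x) + s * phi (\<xi> t x)"
  by (auto simp: level_def field_simps)

lemma level_has_real_derivative:
  assumes nz: "phi (\<xi> t x) \<noteq> 0"
  shows "(level x has_real_derivative 1 + (w' (\<xi> t x) + level x t * phi' (\<xi> t x))\<^sup>2) (at t)"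
proof -
  have "((\<lambda>t. (\<eta> t x - w (\<xi> t x)) / phi (\<xi> t x)) has_real_derivative
     ((phi (\<xi> t x) - w' (\<xi> t x) * F (\<xi> t x) (\<eta> t x)) * phi (\<xi> t x)
       - (\<eta> t x - w (\<xi> t x)) * (phi' (\<xi> t x) * F (\<xi> t x) (\<eta> t x))) / (phi (\<xi> t x) * phi (\<xi> t x))) (at t)"
    by (intro DERIV_divide DERIV_diff eta_has_real_derivative nz
        DERIV_chain2[OF w_has_real_derivative xi_has_real_derivative]
        DERIV_chain2[OF phi_has_real_derivative xi_has_real_derivative])
  moreover have "((phi (\<xi> t x) - w' (\<xi> t x) * F (\<xi> t x) (\<eta> t x)) * phi (\<xi> t x)
       - (\<eta> t x - w (\<xi> t x)) * (phi' (\<xi> t x) * F (\<xi> t x) (\<eta> t x))) / (phi (\<xi> t x) * phi (\<xi> t x))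
      = 1 + (w' (\<xi> t x) + level x t * phi' (\<xi> t x))\<^sup>2"
    using nz by (simp add: level_def F_def field_simps power2_eq_square)
  ultimately show ?thesis by (simp add: level_def[abs_def])
qed

lemma isCont_level: "phi (\<xi> t x) \<noteq> 0 \<Longrightarrow> isCont (level x) t"
  using level_has_real_derivative by (rule DERIV_isCont)

lemma continuous_on_level:
  "(\<And>t. t \<in> {t1..t2} \<Longrightarrow> phi (\<xi> t x) \<noteq> 0) \<Longrightarrow> continuous_on {t1..t2} (level x)"
  by (intro continuous_at_imp_continuous_on ballI isCont_level)

lemma level_increase:
  assumes "t1 \<le> t2" "\<And>t. t \<in> {t1..t2} \<Longrightarrow> phi (\<xi> t x) \<noteq> 0"
  shows "t2 - t1 \<le> level x t2 - level x t1"
proof -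
  have "level x t1 - t1 \<le> level x t2 - t2"
  proof (rule DERIV_nonneg_imp_nondecreasing[OF assms(1)])
    fix t assume "t1 \<le> t" "t \<le> t2"
    then show "\<exists>y. ((\<lambda>t. level x t - t) has_real_derivative y) (at t) \<and> 0 \<le> y"
      using assms(2) by (auto intro!: exI derivative_eq_intros level_has_real_derivative)
  qed
  then show ?thesis by simp
qed

definition phi_component :: "real \<Rightarrow> real \<Rightarrow> bool" where
  "phi_component c1 c2 \<longleftrightarrow> a \<le> c1 \<and> c1 < c2 \<and> c2 \<le> b \<and> phi c1 = 0 \<and> phi c2 = 0 \<and>
     (\<forall>z\<in>{c1<..<c2}. phi z \<noteq> 0)"

lemma phi_componentD:
  assumes "phi_component c1 c2"
  shows "a \<le> c1" "c1 < c2" "c2 \<le> b" "phi c1 = 0" "phi c2 = 0"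
    "\<And>z. c1 < z \<Longrightarrow> z < c2 \<Longrightarrow> phi z \<noteq> 0"
  using assms by (auto simp: phi_component_def)

lemma phi_component_around:
  assumes y: "y \<in> {a..b}" "phi y \<noteq> 0"
  obtains c1 c2 where "phi_component c1 c2" "c1 < y" "y < c2"
proof -
  have p: "poly p y \<noteq> 0" using y by (simp add: ext_zero_def)
  have "p \<noteq> 0" using p by auto
  then have roots: "finite {z. poly p z = 0}" by (rule poly_roots_finite)
  define S1 where "S1 = {z. poly p z = 0} \<inter> {a..y}"
  define S2 where "S2 = {z. poly p z = 0} \<inter> {y..b}"
  have fin: "finite S1" "finite S2" using roots by (auto simp: S1_def S2_def)
  have ends: "a \<in> S1" "b \<in> S2" using p_a p_b y(1) by (auto simp: S1_def S2_def)
  define c1 where "c1 = Max S1"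
  define c2 where "c2 = Min S2"
  have c1: "c1 \<in> S1" "\<And>z. z \<in> S1 \<Longrightarrow> z \<le> c1"
    unfolding c1_def using fin(1) ends(1) by (auto intro: Max_in)
  have c2: "c2 \<in> S2" "\<And>z. z \<in> S2 \<Longrightarrow> c2 \<le> z"
    unfolding c2_def using fin(2) ends(2) by (auto intro: Min_in)
  have "c1 \<noteq> y" "c2 \<noteq> y" using c1(1) c2(1) p by (auto simp: S1_def S2_def)
  then have "c1 < y" "y < c2" using c1(1) c2(1) by (auto simp: S1_def S2_def)
  moreover have "phi_component c1 c2"
    unfolding phi_component_def using c1 c2 ends \<open>c1 < y\<close> \<open>y < c2\<close>
    by (auto simp: S1_def S2_def ext_zero_def not_le[symmetric]) (metis le_cases nle_le order_trans)
  ultimately show ?thesis using that by blast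
qed

lemma trajectory_stays_in_component:
  assumes I: "phi_component c1 c2" and x: "c1 < x" "x < c2" and \<tau>: "0 < \<tau>" "\<tau> \<le> 2"
    and before: "\<And>t. 0 \<le> t \<Longrightarrow> t < \<tau> \<Longrightarrow> c1 < \<xi> t x \<and> \<xi> t x < c2 \<and> \<bar>level x t\<bar> \<le> 1"
  shows "c1 < \<xi> \<tau> x \<and> \<xi> \<tau> x < c2"
proof (rule ccontr)
  assume out: "\<not> (c1 < \<xi> \<tau> x \<and> \<xi> \<tau> x < c2)"
  let ?c = "\<xi> \<tau> x"
  have "c1 \<le> ?c"
    by (rule isCont_le_from_left[where f="\<lambda>_. c1", OF continuous_const isCont_xi \<tau>(1)])
      (use before[OF less_imp_le] in fastforce)
  moreover have "?c \<le> c2"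
    by (rule isCont_le_from_left[where g="\<lambda>_. c2", OF isCont_xi continuous_const \<tau>(1)])
      (use before[OF less_imp_le] in fastforce)
  ultimately
  have c: "?c \<in> {a..b}" "phi ?c = 0"
    using out phi_componentD[OF I] by (auto simp: order.order_iff_strict)
  have "\<bar>\<eta> \<tau> x - w ?c\<bar> \<le> \<bar>phi ?c\<bar>"
  proof (rule isCont_le_from_left[where f="\<lambda>t. \<bar>\<eta> t x - w (\<xi> t x)\<bar>", OF _ _ \<tau>(1)])
    fix t assume t: "0 < t" "t < \<tau>"
    then have "phi (\<xi> t x) \<noteq> 0" using before[of t] phi_componentD(6)[OF I] by auto
    then show "\<bar>\<eta> t x - w (\<xi> t x)\<bar> \<le> \<bar>phi (\<xi> t x)\<bar>"
      using before[of t] t by (simp add: level_mult_phi abs_mult mult_left_le_one_le)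
  qed (auto intro!: continuous_intros isCont_eta isCont_along_xi isCont_w isCont_phi)
  then have "traj x \<tau> = traj ?c \<tau>"
    using equilibrium_trajectory[OF c \<tau>(1)[THEN less_imp_le] \<tau>(2)] c by (simp add: traj_def)
  moreover obtain C where C: "\<And>x1 x2 t. x1 \<in> {a..b} \<Longrightarrow> x2 \<in> {a..b} \<Longrightarrow> 0 \<le> t \<Longrightarrow> t \<le> 2 \<Longrightarrow>
      dist (traj x1 0) (traj x2 0) \<le> C * dist (traj x1 t) (traj x2 t)"
    using trajectory_dist_bounds by metis
  moreover have "x \<in> {a..b}" using x phi_componentD(1,3)[OF I] by auto
  ultimately have "dist (traj x 0) (traj ?c 0) \<le> 0"
    using C[of x ?c \<tau>] c \<tau> by simp
  then have "x = ?c" by (simp add: traj_0)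
  with out x show False by simp
qed

lemma level_below_before_crossing:
  assumes "0 < s" "0 \<le> t" and nz: "\<And>r. r \<in> {0..t} \<Longrightarrow> phi (\<xi> r x) \<noteq> 0 \<and> level x r \<noteq> s"
  shows "t \<le> level x t" "level x t < s"
proof -
  show "t \<le> level x t" using level_increase[of 0 t x] assms by (simp add: level_0)
  show "level x t < s"
  proof (rule ccontr)
    assume "\<not> level x t < s"
    then obtain r where "r \<in> {0..t}" "level x r = s"
      using IVT'[of "level x" 0 s t] continuous_on_level[of 0 t x] assms level_0 by auto
    with nz show False by blast
  qed
qed

lemma level_reaches:
  assumes I: "phi_component c1 c2" and x: "c1 < x" "x < c2" and s: "0 < s" "s \<le> 1"
  obtains T where "0 < T" "T \<le> s" "c1 < \<xi> T x" "\<xi> T x < c2" "level x T = s"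
    "\<And>t. 0 \<le> t \<Longrightarrow> t < T \<Longrightarrow> c1 < \<xi> t x \<and> \<xi> t x < c2 \<and> level x t < s"
proof -
  note nz = phi_componentD(6)[OF I]
  define A where "A = {t \<in> {0..2}. \<xi> t x \<notin> {c1<..<c2} \<or> level x t = s}"
  have A_eq: "A = {0..2} \<inter> ({t. \<xi> t x \<le> c1} \<union> {t. c2 \<le> \<xi> t x}
      \<union> {t. \<eta> t x = w (\<xi> t x) + s * phi (\<xi> t x)})"
    using nz by (auto simp: A_def level_eq_iff)
  have "closed A"
    unfolding A_eq
    by (intro closed_Int closed_Un closed_atLeastAtMost closed_Collect_le closed_Collect_eq
        continuous_at_imp_continuous_on ballI continuous_intros isCont_xi isCont_eta
        isCont_along_xi isCont_w isCont_phi)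
  moreover have "A \<noteq> {}"
  proof
    assume "A = {}"
    then have "\<xi> t x \<in> {c1<..<c2} \<and> level x t \<noteq> s" if "t \<in> {0..2}" for t
      using that by (auto simp: A_def)
    then have "2 \<le> level x 2" "level x 2 < s"
      using level_below_before_crossing[OF s(1), of 2 x] nz by auto
    with s show False by simp
  qed
  moreover have bdd: "bdd_below A" unfolding A_def by (rule bdd_belowI[of _ 0]) auto
  ultimately have "Inf A \<in> A" by (intro closed_contains_Inf)
  define T where "T = Inf A"
  have T: "0 \<le> T" "T \<le> 2" "\<xi> T x \<notin> {c1<..<c2} \<or> level x T = s"
    using \<open>Inf A \<in> A\<close> by (auto simp: T_def A_def)
  have before: "c1 < \<xi> t x \<and> \<xi> t x < c2 \<and> level x t \<noteq> s" if "0 \<le> t" "t < T" for t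
    using cInf_lower[OF _ bdd, of t] that T unfolding T_def A_def by force
  have level_below: "t \<le> level x t \<and> level x t < s" if "0 \<le> t" "t < T" for t
    using level_below_before_crossing[OF s(1) that(1)] before that nz by auto
  have "T \<noteq> 0" using T(3) init x nz[OF x] s by (auto simp: level_0)
  then have "0 < T" using T by simp
  have inside: "c1 < \<xi> T x \<and> \<xi> T x < c2"
  proof (rule trajectory_stays_in_component[OF I x \<open>0 < T\<close> T(2)])
    fix t assume "0 \<le> t" "t < T"
    then show "c1 < \<xi> t x \<and> \<xi> t x < c2 \<and> \<bar>level x t\<bar> \<le> 1"
      using before level_below s by fastforce
  qed
  then have "level x T = s" using T(3) by simp
  moreover have "T - 0 \<le> level x T - level x 0"
    using before inside nz by (intro level_increase[OF T(1)]) (metis atLeastAtMost_iff order_le_less)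
  ultimately show ?thesis
    using that[OF \<open>0 < T\<close>] inside level_below before by (simp add: level_0)
qed

abbreviation hit_time :: "real \<Rightarrow> real \<Rightarrow> real" where
  "hit_time s x \<equiv> first_time \<xi> \<eta> w phi s x"

abbreviation g :: "real \<Rightarrow> real \<Rightarrow> real" where
  "g s x \<equiv> \<xi> (hit_time s x) x"

abbreviation h :: "real \<Rightarrow> real \<Rightarrow> real" where
  "h s x \<equiv> \<eta> (hit_time s x) x"

lemma hit_time_eqI:
  assumes "0 \<le> T" "\<eta> T x = w (\<xi> T x) + s * phi (\<xi> T x)"
    and "\<And>t. 0 \<le> t \<Longrightarrow> t < T \<Longrightarrow> \<eta> t x \<noteq> w (\<xi> t x) + s * phi (\<xi> t x)"
  shows "hit_time s x = T"
  unfolding first_time_def using assms by (intro cInf_eq_minimum) (auto simp: not_less[symmetric])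

lemma hit_time_trivial:
  assumes "phi x = 0 \<or> s = 0"
  shows "hit_time s x = 0" "g s x = x" "h s x = w x"
proof -
  show "hit_time s x = 0" using assms init by (intro hit_time_eqI) auto
  then show "g s x = x" "h s x = w x" using init by simp_all
qed

lemma hit_time_in_component:
  assumes I: "phi_component c1 c2" and x: "c1 < x" "x < c2" and s: "0 < s" "s \<le> 1"
  shows "0 < hit_time s x" "hit_time s x \<le> s" "c1 < g s x" "g s x < c2" "level x (hit_time s x) = s"
    "\<And>t. 0 \<le> t \<Longrightarrow> t < hit_time s x \<Longrightarrow> c1 < \<xi> t x \<and> \<xi> t x < c2 \<and> level x t < s"
proof -
  obtain T where T: "0 < T" "T \<le> s" "c1 < \<xi> T x" "\<xi> T x < c2" "level x T = s"
    and before: "\<And>t. 0 \<le> t \<Longrightarrow> t < T \<Longrightarrow> c1 < \<xi> t x \<and> \<xi> t x < c2 \<and> level x t < s"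
    using level_reaches[OF I x s] by blast
  note nz = phi_componentD(6)[OF I]
  have "hit_time s x = T"
  proof (rule hit_time_eqI)
    show "0 \<le> T" using T(1) by simp
    show "\<eta> T x = w (\<xi> T x) + s * phi (\<xi> T x)" using T(3-5) nz level_eq_iff by simp
    fix t assume "0 \<le> t" "t < T"
    with before have "phi (\<xi> t x) \<noteq> 0" "level x t \<noteq> s" using nz by auto
    then show "\<eta> t x \<noteq> w (\<xi> t x) + s * phi (\<xi> t x)" using level_eq_iff by simp
  qed
  then show "0 < hit_time s x" "hit_time s x \<le> s" "c1 < g s x" "g s x < c2" "level x (hit_time s x) = s"
    "\<And>t. 0 \<le> t \<Longrightarrow> t < hit_time s x \<Longrightarrow> c1 < \<xi> t x \<and> \<xi> t x < c2 \<and> level x t < s"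
    using T before by simp_all
qed

lemma graph_point_in_component:
  assumes I: "phi_component c1 c2" and x: "c1 < x" "x < c2" and s: "0 < s" "s \<le> 1"
  shows "c1 < g s x" "g s x < c2" "h s x = w (g s x) + s * phi (g s x)"
proof -
  show inside: "c1 < g s x" "g s x < c2" using hit_time_in_component[OF assms] by simp_all
  then have "phi (g s x) \<noteq> 0" by (rule phi_componentD(6)[OF I])
  then show "h s x = w (g s x) + s * phi (g s x)"
    using hit_time_in_component(5)[OF assms] level_eq_iff by simp
qed

lemma hit_time_bounds:
  assumes "x \<in> {a..b}" "0 \<le> s" "s \<le> 1"
  shows "0 \<le> hit_time s x" "hit_time s x \<le> 1"
proof -
  have "0 \<le> hit_time s x \<and> hit_time s x \<le> 1"
  proof (cases "phi x = 0 \<or> s = 0")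
    case True then show ?thesis using hit_time_trivial by simp
  next
    case False
    then obtain c1 c2 where "phi_component c1 c2" "c1 < x" "x < c2"
      using phi_component_around assms(1) by blast
    with False assms show ?thesis using hit_time_in_component(1,2)[of c1 c2 x s] by auto
  qed
  then show "0 \<le> hit_time s x" "hit_time s x \<le> 1" by simp_all
qed

section \<open>Continuity of g\<close>

lemma traj_tendsto:
  assumes "x0 \<in> {a..b}" "0 \<le> t" "t \<le> 2"
  shows "((\<lambda>x. traj x t) \<longlongrightarrow> traj x0 t) (at x0 within {a..b})"
proof (rule tendstoI)
  fix e :: real assume "e > 0"
  from dist_traj_tendsto_0[OF assms(1) this]
  show "\<forall>\<^sub>F x in at x0 within {a..b}. dist (traj x t) (traj x0 t) < e"
    by eventually_elim (use assms(2,3) in auto)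
qed

lemma level_tendsto:
  assumes x0: "a < x0" "x0 < b" and t: "0 \<le> t" "t \<le> 2" and nz: "phi (\<xi> t x0) \<noteq> 0"
  shows "((\<lambda>x. level x t) \<longlongrightarrow> level x0 t) (at x0)"
proof -
  have "((\<lambda>x. traj x t) \<longlongrightarrow> traj x0 t) (at x0)"
    using traj_tendsto[of x0 t] x0 t by (simp add: at_within_Icc_interior)
  then have "((\<lambda>x. \<xi> t x) \<longlongrightarrow> \<xi> t x0) (at x0)" "((\<lambda>x. \<eta> t x) \<longlongrightarrow> \<eta> t x0) (at x0)"
    by (auto dest: tendsto_fst tendsto_snd simp: traj_def)
  then show ?thesis unfolding level_def
    by (intro tendsto_intros isCont_tendsto_compose[OF isCont_w]
        isCont_tendsto_compose[OF isCont_phi] nz)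
qed

lemma eventually_trajectory_inside:
  assumes x0: "a < x0" "x0 < b" and T: "0 \<le> T" "T \<le> 2"
    and inside: "\<And>t. t \<in> {0..T} \<Longrightarrow> \<xi> t x0 \<in> {c1<..<c2}"
  shows "\<forall>\<^sub>F x in at x0. \<forall>t\<in>{0..T}. \<xi> t x \<in> {c1<..<c2}"
proof -
  define m where "m t = min (\<xi> t x0 - c1) (c2 - \<xi> t x0)" for t
  have "continuous_on {0..T} m"
    unfolding m_def by (intro continuous_at_imp_continuous_on ballI continuous_intros isCont_xi)
  then obtain t0 where t0: "t0 \<in> {0..T}" "\<And>t. t \<in> {0..T} \<Longrightarrow> m t0 \<le> m t"
    using continuous_attains_inf[of "{0..T}" m] T by auto
  have "m t0 > 0" using inside[OF t0(1)] by (simp add: m_def)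
  then have "\<forall>\<^sub>F x in at x0. \<forall>t\<in>{0..2}. dist (traj x t) (traj x0 t) < m t0"
    using dist_traj_tendsto_0[of x0] x0 by (simp add: at_within_Icc_interior)
  then show ?thesis
  proof (rule eventually_mono, intro ballI)
    fix x t assume close: "\<forall>t\<in>{0..2}. dist (traj x t) (traj x0 t) < m t0" and t: "t \<in> {0..T}"
    have "\<bar>\<xi> t x - \<xi> t x0\<bar> < m t0"
      using close dist_fst_le[of "traj x t" "traj x0 t"] t T by (force simp: traj_def dist_real_def)
    then show "\<xi> t x \<in> {c1<..<c2}" using t0(2)[OF t] by (auto simp: m_def)
  qed
qed

lemma hit_time_trajectory_in_component:
  assumes I: "phi_component c1 c2" and x: "c1 < x" "x < c2" and s: "0 < s" "s \<le> 1"
    and t: "t \<in> {0..hit_time s x}"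
  shows "\<xi> t x \<in> {c1<..<c2}"
  using hit_time_in_component[OF I x s] t by (cases "t = hit_time s x") auto

lemma eventually_hit_time_gt:
  assumes I: "phi_component c1 c2" and x0: "c1 < x0" "x0 < c2" and s: "0 < s" "s \<le> 1"
    and l: "l < hit_time s x0"
  shows "\<forall>\<^sub>F x in at x0. l < hit_time s x"
proof -
  note hit = hit_time_in_component[OF I _ _ s]
  define T0 where "T0 = hit_time s x0"
  define l' where "l' = max l 0"
  have l': "0 \<le> l'" "l' < T0" "l \<le> l'" using l hit(1)[OF x0] by (auto simp: l'_def T0_def)
  have x0_ab: "a < x0" "x0 < b" using x0 phi_componentD(1,3)[OF I] by auto
  have "\<forall>\<^sub>F x in at x0. c1 < x \<and> x < c2 \<and> (\<forall>t\<in>{0..T0}. \<xi> t x \<in> {c1<..<c2})"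
    using eventually_conj[OF eventually_at_in_open'[of "{c1<..<c2}" x0]
        eventually_trajectory_inside[OF x0_ab _ _ hit_time_trajectory_in_component[OF I x0 s]]]
      x0 hit(1,2)[OF x0] s by (simp add: T0_def)
  moreover have "\<forall>\<^sub>F x in at x0. level x l' < s"
  proof (rule order_tendstoD(2)[OF level_tendsto[OF x0_ab l'(1)]])
    show "level x0 l' < s" using hit(6)[OF x0 l'(1)] l'(2) by (simp add: T0_def)
    show "l' \<le> 2" "phi (\<xi> l' x0) \<noteq> 0"
      using l' hit(2)[OF x0] s hit_time_trajectory_in_component[OF I x0 s, of l']
        phi_componentD(6)[OF I]
      by (auto simp: T0_def)
  qed
  ultimately show ?thesis
  proof eventually_elim
    case (elim x)
    then have x: "c1 < x" "x < c2" by auto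
    show ?case
    proof (rule ccontr)
      assume "\<not> l < hit_time s x"
      then have early: "hit_time s x \<le> l'" using l' by simp
      moreover have "phi (\<xi> t x) \<noteq> 0" if "t \<in> {hit_time s x..l'}" for t
        using elim that hit(1)[OF x] l' phi_componentD(6)[OF I] by auto
      ultimately have "l' - hit_time s x \<le> level x l' - level x (hit_time s x)"
        by (rule level_increase)
      then show False using hit(5)[OF x] elim early by simp
    qed
  qed
qed

lemma eventually_hit_time_lt:
  assumes I: "phi_component c1 c2" and x0: "c1 < x0" "x0 < c2" and s: "0 < s" "s \<le> 1"
    and u: "hit_time s x0 < u"
  shows "\<forall>\<^sub>F x in at x0. hit_time s x < u"
proof -
  note hit = hit_time_in_component[OF I _ _ s]
  note nz = phi_componentD(6)[OF I]
  define T0 where "T0 = hit_time s x0"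
  have T0: "0 < T0" "T0 \<le> 1" using hit(1,2)[OF x0] s by (auto simp: T0_def)
  have x0_ab: "a < x0" "x0 < b" using x0 phi_componentD(1,3)[OF I] by auto
  have "\<forall>\<^sub>F t in at T0. \<xi> t x0 \<in> {c1<..<c2}"
    using isCont_xi[where x=x0 and t=T0] hit(3,4)[OF x0] unfolding isCont_def T0_def
    by (intro topological_tendstoD) auto
  then obtain d where d: "d > 0" "\<And>t. t \<noteq> T0 \<Longrightarrow> dist t T0 < d \<Longrightarrow> \<xi> t x0 \<in> {c1<..<c2}"
    by (auto simp: eventually_at)
  define u' where "u' = min u (T0 + min (d / 2) 1)"
  have u': "T0 < u'" "u' \<le> u" "u' \<le> 2" using u d T0 by (auto simp: u'_def T0_def)
  have nz_u': "phi (\<xi> t x0) \<noteq> 0" if "t \<in> {T0..u'}" for t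
    using d(2)[of t] hit(3,4)[OF x0] that d(1) nz
    by (cases "t = T0") (auto simp: u'_def dist_real_def T0_def)
  have "u' - T0 \<le> level x0 u' - level x0 T0" by (rule level_increase[OF _ nz_u']) (use u' in auto)
  then have "s < level x0 u'" using hit(5)[OF x0] u' by (simp add: T0_def)
  then have "\<forall>\<^sub>F x in at x0. s < level x u'"
    using level_tendsto[OF x0_ab _ u'(3) nz_u'[of u']] u' T0 by (auto intro: order_tendstoD)
  moreover have "\<forall>\<^sub>F x in at x0. c1 < x \<and> x < c2"
    using eventually_at_in_open'[of "{c1<..<c2}" x0] x0 by simp
  ultimately show ?thesis
  proof eventually_elim
    case (elim x)
    then have x: "c1 < x" "x < c2" by auto
    have "\<not> u' < hit_time s x" "u' \<noteq> hit_time s x"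
      using hit(5)[OF x] hit(6)[OF x, of u'] elim u' T0 by auto
    then show ?case using u' by simp
  qed
qed

lemma isCont_hit_time:
  assumes "phi_component c1 c2" "c1 < x0" "x0 < c2" "0 < s" "s \<le> 1"
  shows "isCont (hit_time s) x0"
  unfolding isCont_def using assms
  by (intro order_tendstoI eventually_hit_time_gt eventually_hit_time_lt)

lemma tendsto_xi_hit_time_diff:
  assumes S: "x0 \<in> S" "S \<subseteq> {a..b}" and s: "0 \<le> s" "s \<le> 1"
  shows "((\<lambda>x. \<xi> (hit_time s x) x - \<xi> (hit_time s x) x0) \<longlongrightarrow> 0) (at x0 within S)"
proof (rule tendstoI)
  fix e :: real assume "e > 0"
  with S have "\<forall>\<^sub>F x in at x0 within S. \<forall>t\<in>{0..2}. dist (traj x t) (traj x0 t) < e"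
    using dist_traj_tendsto_0 filter_leD[OF at_le[OF S(2)]] by blast
  moreover have "\<forall>\<^sub>F x in at x0 within S. x \<in> S" by (simp add: eventually_at_filter)
  ultimately show "\<forall>\<^sub>F x in at x0 within S. dist (\<xi> (hit_time s x) x - \<xi> (hit_time s x) x0) 0 < e"
  proof eventually_elim
    case (elim x)
    then have "dist (traj x (hit_time s x)) (traj x0 (hit_time s x)) < e"
      using hit_time_bounds[of x s] S s by auto
    then show ?case
      using dist_fst_le[of "traj x (hit_time s x)" "traj x0 (hit_time s x)"]
      by (simp add: traj_def dist_real_def)
  qed
qed

lemma continuous_on_g:
  assumes I: "phi_component c1 c2" and s: "0 < s" "s \<le> 1"
  shows "continuous_on {c1..c2} (g s)"
  unfolding continuous_on_def
proof
  fix x0 assume x0: "x0 \<in> {c1..c2}"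
  have sub: "{c1..c2} \<subseteq> {a..b}" using phi_componentD(1,3)[OF I] by auto
  have "((\<lambda>x. \<xi> (hit_time s x) x0) \<longlongrightarrow> g s x0) (at x0 within {c1..c2})"
  proof (cases "x0 = c1 \<or> x0 = c2")
    case True
    then have x0_eq: "x0 \<in> {a..b}" "phi x0 = 0" using x0 sub phi_componentD(4,5)[OF I] by auto
    have "\<forall>\<^sub>F x in at x0 within {c1..c2}. x \<in> {c1..c2}" by (simp add: eventually_at_filter)
    then have "\<forall>\<^sub>F x in at x0 within {c1..c2}. \<xi> (hit_time s x) x0 = g s x0"
    proof eventually_elim
      case (elim x)
      then have "0 \<le> hit_time s x" "hit_time s x \<le> 2" using hit_time_bounds[of x s] sub s by auto
      then show ?case using equilibrium_trajectory[OF x0_eq] hit_time_trivial[of x0 s] x0_eq by simp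
    qed
    then show ?thesis by (rule tendsto_eventually)
  next
    case False
    then have "c1 < x0" "x0 < c2" using x0 by auto
    then have "isCont (\<lambda>x. \<xi> (hit_time s x) x0) x0"
      by (intro isCont_o2[OF isCont_hit_time[OF I _ _ s]] isCont_xi)
    then show ?thesis unfolding isCont_def by (rule tendsto_within_subset) simp
  qed
  from tendsto_add[OF tendsto_xi_hit_time_diff[OF x0 sub, of s] this] s
  show "(g s \<longlongrightarrow> g s x0) (at x0 within {c1..c2})" by simp
qed

lemma g_onto_component:
  assumes I: "phi_component c1 c2" and y: "c1 < y" "y < c2" and s: "0 < s" "s \<le> 1"
  obtains x where "c1 < x" "x < c2" "g s x = y"
proof -
  note c = phi_componentD[OF I]
  have ends: "g s c1 = c1" "g s c2 = c2" using hit_time_trivial c(4,5) by auto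
  then obtain x where x: "x \<in> {c1..c2}" "g s x = y"
    using IVT'[of "g s" c1 y c2] continuous_on_g[OF I s] y by auto
  with y ends have "x \<noteq> c1" "x \<noteq> c2" by auto
  with x show ?thesis by (intro that) auto
qed

lemma graph_image:
  assumes s: "s \<in> {0..1}"
  shows "(\<lambda>x. (g s x, h s x)) ` {a..b} = (\<lambda>x. (x, w x + s * phi x)) ` {a..b}"
proof (cases "s = 0")
  case True
  then show ?thesis using hit_time_trivial(1) init by simp
next
  case False
  then have s: "0 < s" "s \<le> 1" using s by auto
  show ?thesis
  proof (intro equalityI subsetI)
    fix q assume "q \<in> (\<lambda>x. (g s x, h s x)) ` {a..b}"
    then obtain x where x: "x \<in> {a..b}" "q = (g s x, h s x)" by auto
    show "q \<in> (\<lambda>x. (x, w x + s * phi x)) ` {a..b}"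
    proof (cases "phi x = 0")
      case True
      then show ?thesis using hit_time_trivial[of x s] x by auto
    next
      case False
      then obtain c1 c2 where I: "phi_component c1 c2" "c1 < x" "x < c2"
        using phi_component_around x(1) by blast
      then have "g s x \<in> {a..b}"
        using graph_point_in_component(1,2)[OF I s] phi_componentD(1,3)[OF I(1)] by auto
      then show ?thesis using graph_point_in_component(3)[OF I s] x(2) by auto
    qed
  next
    fix q assume "q \<in> (\<lambda>x. (x, w x + s * phi x)) ` {a..b}"
    then obtain y where y: "y \<in> {a..b}" "q = (y, w y + s * phi y)" by auto
    show "q \<in> (\<lambda>x. (g s x, h s x)) ` {a..b}"
    proof (cases "phi y = 0")
      case True
      then show ?thesis using hit_time_trivial[of y s] y by (auto intro!: image_eqI[of _ _ y])
    next
      case False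
      then obtain c1 c2 where I: "phi_component c1 c2" "c1 < y" "y < c2"
        using phi_component_around y(1) by blast
      then obtain x where x: "c1 < x" "x < c2" "g s x = y" using g_onto_component s by metis
      then have "h s x = w y + s * phi y" "x \<in> {a..b}"
        using graph_point_in_component(3)[OF I(1) x(1,2) s] phi_componentD(1,3)[OF I(1)] by auto
      then show ?thesis using x(3) y(2) by (auto intro!: image_eqI[of _ _ x])
    qed
  qed
qed

end

theorem theorem3p6:
  fixes w :: "real \<Rightarrow> real" and p :: "real poly" and a b :: real
    and \<xi> \<eta> :: "real \<Rightarrow> real \<Rightarrow> real" and s :: real
  assumes w_C3: "C_k 3 w"
    and w_per: "periodic_fun w"
    and w_pos: "\<forall>x\<in>{-1..1}. w x > 0"
    and ab: "-1 < a" "a < b" "b < 1"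
    and p_a: "\<forall>k\<le>3. poly ((pderiv ^^ k) p) a = 0"
    and p_b: "\<forall>k\<le>3. poly ((pderiv ^^ k) p) b = 0"
    and xi_ode: "\<forall>x t. ((\<lambda>t. \<xi> t x) has_real_derivative
          (- deriv w (\<xi> t x) * ext_zero p a b (\<xi> t x)
           - (\<eta> t x - w (\<xi> t x)) * deriv (ext_zero p a b) (\<xi> t x))) (at t)"
    and eta_ode: "\<forall>x t. ((\<lambda>t. \<eta> t x) has_real_derivative ext_zero p a b (\<xi> t x)) (at t)"
    and init: "\<forall>x. \<xi> 0 x = x \<and> \<eta> 0 x = w x"
    and s: "s \<in> {0..1}"
  shows "(\<lambda>x. (\<xi> (first_time \<xi> \<eta> w (ext_zero p a b) s x) x,
               \<eta> (first_time \<xi> \<eta> w (ext_zero p a b) s x) x)) ` {a..b}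
         = (\<lambda>x. (x, w x + s * ext_zero p a b x)) ` {a..b}"
proof -
  interpret graph_flow w p a b \<xi> \<eta>
    using w_C3 ab(2) p_a p_b xi_ode eta_ode init by unfold_locales
  show ?thesis using graph_image[OF s] .
qed

end
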